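(* Let $K\ge1$, $p_1,\dots,p_K>0$, $c_1,\dots,c_K>0$, and let $\bar B=\frac12\sum_{k=1}^Kp_kc_k$. For $B>0$ consider the problem $$\max_{\mathbf{a}}\ -\sum_{k=1}^K\big[(p_k-a_k)\log(p_k-a_k)+a_k\log a_k\big]\quad\text{s.t.}\quad\sum_{k=1}^Ka_kc_k\le B,\ \ 0\le a_k\le p_k\ \forall k.$$ There is a unique function $\lambda(B)\ge0$, which is one-to-one for $0<B\le\bar B$ and satisfies $\lambda(B)=0$ for $B\ge\bar B$, such that the problem has a unique solution, given by $$a^*_k(B)=\frac{p_k}{1+\exp[\lambda(B)c_k]},\qquad k\in[K].$$
   Context: Here $0\log 0=0$. In the paper $p_k$ is the average (per vertex) number of vertex pairs at distance scale $k$ and $c_k$ the cost of a pair at scale $k$. *)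

theory Defs
  imports Complex_Main
begin

definition xlogx :: "real \<Rightarrow> real" where
  "xlogx x = (if x = 0 then 0 else x * ln x)"

text \<open>Objective of the problem, indices k in {0..<K} (i.e. [K]).\<close>
definition objective :: "nat \<Rightarrow> (nat \<Rightarrow> real) \<Rightarrow> (nat \<Rightarrow> real) \<Rightarrow> real" where
  "objective K p a = - (\<Sum>k<K. xlogx (p k - a k) + xlogx (a k))"

definition feasible :: "nat \<Rightarrow> (nat \<Rightarrow> real) \<Rightarrow> (nat \<Rightarrow> real) \<Rightarrow> real \<Rightarrow> (nat \<Rightarrow> real) \<Rightarrow> bool" where
  "feasible K p c B a \<longleftrightarrow> (\<Sum>k<K. a k * c k) \<le> B \<and> (\<forall>k<K. 0 \<le> a k \<and> a k \<le> p k)"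

definition is_optimal :: "nat \<Rightarrow> (nat \<Rightarrow> real) \<Rightarrow> (nat \<Rightarrow> real) \<Rightarrow> real \<Rightarrow> (nat \<Rightarrow> real) \<Rightarrow> bool" where
  "is_optimal K p c B a \<longleftrightarrow> feasible K p c B a \<and>
     (\<forall>b. feasible K p c B b \<longrightarrow> objective K p b \<le> objective K p a)"

definition unique_solution :: "nat \<Rightarrow> (nat \<Rightarrow> real) \<Rightarrow> (nat \<Rightarrow> real) \<Rightarrow> real \<Rightarrow> (nat \<Rightarrow> real) \<Rightarrow> bool" where
  "unique_solution K p c B x \<longleftrightarrow> is_optimal K p c B x \<and>
     (\<forall>a. is_optimal K p c B a \<longrightarrow> (\<forall>k<K. a k = x k))"

end

theory Submission
  imports Defs
begin

text \<open>The objective is strictly concave and the constraint is linear, so Lagrangian duality is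
exact. For a multiplier \<open>l \<ge> 0\<close> the Lagrangian separates into one-dimensional terms
\<open>-(p-x) log(p-x) - x log x - l c x\<close>, each maximised exactly at the logistic point
\<open>x = p / (1 + exp (l c))\<close>; this is Gibbs' inequality \<open>ln u \<le> u - 1\<close> in disguise. Hence the
logistic allocation is the unique maximiser as soon as \<open>l\<close> satisfies complementary slackness.
Its cost is continuous in \<open>l\<close>, equals \<open>Bbar\<close> at \<open>l = 0\<close> and tends to \<open>0\<close>, so the intermediate
value theorem provides the multiplier for \<open>B < Bbar\<close>; injectivity of the multiplier and its
uniqueness follow because the allocation determines \<open>l\<close>.\<close>

lemma xlogx_tangent:
  fixes w u :: real
  assumes "0 \<le> w" "0 < u"
  shows "- xlogx w + w * ln u \<le> u - w"
    and "- xlogx w + w * ln u = u - w \<longleftrightarrow> w = u"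
proof -
  have "- xlogx w + w * ln u \<le> u - w \<and> (- xlogx w + w * ln u = u - w \<longleftrightarrow> w = u)"
  proof (cases "w = 0")
    case True
    then show ?thesis using assms by (simp add: xlogx_def)
  next
    case False
    with assms have w: "0 < w" by simp
    have quot: "0 < u / w" using w assms by simp
    have "- xlogx w + w * ln u - (u - w) = w * (ln (u / w) - (u / w - 1))"
      using w assms by (simp add: xlogx_def ln_div field_simps)
    moreover have "w * (ln (u / w) - (u / w - 1)) \<le> 0"
      using ln_le_minus_one[OF quot] w by (simp add: mult_nonneg_nonpos)
    moreover have "w * (ln (u / w) - (u / w - 1)) = 0 \<longleftrightarrow> w = u"
      using ln_eq_minus_one[OF quot] w by auto
    ultimately show ?thesis by linarith
  qed
  then show "- xlogx w + w * ln u \<le> u - w" and "- xlogx w + w * ln u = u - w \<longleftrightarrow> w = u"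
    by auto
qed

definition binary_lagrangian :: "real \<Rightarrow> real \<Rightarrow> real \<Rightarrow> real" where
  "binary_lagrangian t p x = - xlogx (p - x) - xlogx x - t * x"

lemma binary_lagrangian_le:
  assumes "0 < p" "0 \<le> x" "x \<le> p"
  shows "binary_lagrangian t p x \<le> p * ln ((1 + exp (- t)) / p)"
    and "binary_lagrangian t p x = p * ln ((1 + exp (- t)) / p) \<longleftrightarrow> x = p / (1 + exp t)"
proof -
  \<comment> \<open>\<open>u1\<close> and \<open>u0\<close> are the maximising values of \<open>p - x\<close> and \<open>x\<close>; the bound is the sum of
    the two tangent inequalities at these points.\<close>
  define u1 where "u1 = p / (1 + exp (- t))"
  define u0 where "u0 = p / (1 + exp t)"
  have pos: "0 < 1 + exp t" "0 < 1 + exp (- t)" by (simp_all add: add_pos_pos)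
  have u1: "0 < u1" and u0: "0 < u0" using assms pos by (simp_all add: u1_def u0_def)
  have "u0 = u1 * exp (- t)"
    using pos by (simp add: u0_def u1_def exp_minus field_simps)
  then have ln_u0: "ln u0 = ln u1 - t" using u1 by (simp add: ln_mult)
  have "u1 = p * exp t / (1 + exp t)"
    using pos by (simp add: u1_def exp_minus field_simps)
  then have sum_u: "u1 + u0 = p"
    using pos by (simp add: u0_def field_simps)
  have bound: "p * ln ((1 + exp (- t)) / p) = - p * ln u1"
    using assms pos by (simp add: u1_def ln_div algebra_simps)
  define gap1 where "gap1 = u1 - (p - x) - (- xlogx (p - x) + (p - x) * ln u1)"
  define gap0 where "gap0 = u0 - x - (- xlogx x + x * ln u0)"
  have gap1: "0 \<le> gap1" "gap1 = 0 \<longleftrightarrow> p - x = u1"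
    using xlogx_tangent[of "p - x" u1] assms u1 by (auto simp: gap1_def)
  have gap0: "0 \<le> gap0" "gap0 = 0 \<longleftrightarrow> x = u0"
    using xlogx_tangent[of x u0] assms u0 by (auto simp: gap0_def)
  have split: "p * ln ((1 + exp (- t)) / p) - binary_lagrangian t p x = gap1 + gap0"
    using sum_u unfolding bound binary_lagrangian_def gap1_def gap0_def ln_u0
    by (simp add: algebra_simps)
  show "binary_lagrangian t p x \<le> p * ln ((1 + exp (- t)) / p)"
    using split gap1 gap0 by linarith
  show "binary_lagrangian t p x = p * ln ((1 + exp (- t)) / p) \<longleftrightarrow> x = p / (1 + exp t)"
    using split gap1 gap0 sum_u unfolding u0_def[symmetric] by auto
qed

definition allocation :: "(nat \<Rightarrow> real) \<Rightarrow> (nat \<Rightarrow> real) \<Rightarrow> real \<Rightarrow> nat \<Rightarrow> real" where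
  "allocation p c l k = p k / (1 + exp (l * c k))"

definition allocation_cost :: "nat \<Rightarrow> (nat \<Rightarrow> real) \<Rightarrow> (nat \<Rightarrow> real) \<Rightarrow> real \<Rightarrow> real" where
  "allocation_cost K p c l = (\<Sum>k<K. allocation p c l k * c k)"

lemma allocation_bounds:
  assumes "0 < p k"
  shows "0 \<le> allocation p c l k" "allocation p c l k \<le> p k"
  using assms by (simp_all add: allocation_def add_pos_pos divide_le_eq)

lemma allocation_eq_iff:
  assumes "0 < p k" "0 < c k"
  shows "allocation p c m k = allocation p c l k \<longleftrightarrow> m = l"
  using assms by (simp add: allocation_def divide_cancel_left)

lemma allocation_cost_zero: "allocation_cost K p c 0 = (1/2) * (\<Sum>k<K. p k * c k)"
  by (simp add: allocation_cost_def allocation_def sum_distrib_left)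

lemma isCont_allocation_cost: "isCont (allocation_cost K p c) l"
proof -
  have "\<And>k. 1 + exp (l * c k) \<noteq> 0" by (metis add_pos_pos exp_gt_zero less_irrefl zero_less_one)
  then show ?thesis
    unfolding allocation_cost_def allocation_def by (intro continuous_intros)
qed

lemma allocation_cost_le:
  assumes "\<forall>k<K. 0 < p k" "\<forall>k<K. 0 < c k" "0 < l"
  shows "allocation_cost K p c l \<le> (\<Sum>k<K. p k) / l"
proof -
  have "allocation p c l k * c k \<le> p k / l" if "k < K" for k
  proof -
    have pc: "0 < p k" "0 < c k" using assms that by auto
    have "l * c k \<le> 1 + exp (l * c k)"
      using exp_ge_add_one_self[of "l * c k"] by linarith
    then have "p k * c k / (1 + exp (l * c k)) \<le> p k * c k / (l * c k)"
      using pc assms by (intro divide_left_mono) (auto simp: add_pos_pos)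
    then show ?thesis using pc by (simp add: allocation_def)
  qed
  then have "allocation_cost K p c l \<le> (\<Sum>k<K. p k / l)"
    unfolding allocation_cost_def by (intro sum_mono) auto
  then show ?thesis by (simp add: sum_divide_distrib)
qed

lemma allocation_cost_attains:
  assumes "\<forall>k<K. 0 < p k" "\<forall>k<K. 0 < c k" "0 < B" "B \<le> allocation_cost K p c 0"
  shows "\<exists>l\<ge>0. allocation_cost K p c l = B"
proof -
  define P where "P = (\<Sum>k<K. p k)"
  have "0 \<le> P" unfolding P_def using assms(1) by (intro sum_nonneg) (simp add: less_imp_le)
  define L where "L = 1 + P / B"
  have L: "0 < L" using \<open>0 \<le> P\<close> assms(3) by (simp add: L_def add_pos_nonneg)
  have "allocation_cost K p c L \<le> P / L"
    using allocation_cost_le[OF assms(1,2) L] by (simp add: P_def)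
  also have "\<dots> \<le> B" using L assms(3) by (simp add: divide_le_eq L_def field_simps)
  finally obtain l where "0 \<le> l" "l \<le> L" "allocation_cost K p c l = B"
    using IVT2[of "allocation_cost K p c" L B 0] assms(4) L isCont_allocation_cost by auto
  then show ?thesis by auto
qed

lemma objective_eq_lagrangian:
  "objective K p b = (\<Sum>k<K. binary_lagrangian (l * c k) (p k) (b k)) + l * (\<Sum>k<K. b k * c k)"
  unfolding objective_def binary_lagrangian_def
  by (simp add: sum_distrib_left sum.distrib[symmetric] sum_negf[symmetric] algebra_simps)

lemma allocation_unique_solution:
  assumes p: "\<forall>k<K. 0 < p k" and "0 \<le> l" and "allocation_cost K p c l \<le> B"
    and slack: "l = 0 \<or> allocation_cost K p c l = B"
  shows "unique_solution K p c B (allocation p c l)"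
proof -
  define a where "a = allocation p c l"
  define M where "M k = p k * ln ((1 + exp (- (l * c k))) / p k)" for k
  define gap where "gap b k = M k - binary_lagrangian (l * c k) (p k) (b k)" for b k
  have feasible_a: "feasible K p c B a"
    using assms allocation_bounds by (auto simp: feasible_def a_def allocation_cost_def)
  have gap: "0 \<le> gap b k \<and> (gap b k = 0 \<longleftrightarrow> b k = a k)"
    if "feasible K p c B b" "k < K" for b k
  proof -
    have "0 < p k" "0 \<le> b k" "b k \<le> p k" using that p by (auto simp: feasible_def)
    from binary_lagrangian_le[OF this, of "l * c k"] show ?thesis
      by (auto simp: gap_def M_def a_def allocation_def)
  qed
  have "l * (\<Sum>k<K. a k * c k) = l * B"
    using slack by (auto simp: a_def allocation_cost_def)
  moreover have "(\<Sum>k<K. binary_lagrangian (l * c k) (p k) (a k)) = (\<Sum>k<K. M k)"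
    using gap[OF feasible_a] by (intro sum.cong) (auto simp: gap_def)
  ultimately have obj_a: "objective K p a = (\<Sum>k<K. M k) + l * B"
    using objective_eq_lagrangian[of K p a l c] by simp
  have obj_b: "objective K p b + (\<Sum>k<K. gap b k) \<le> objective K p a"
    if "feasible K p c B b" for b
  proof -
    have "l * (\<Sum>k<K. b k * c k) \<le> l * B"
      using that \<open>0 \<le> l\<close> by (simp add: feasible_def mult_left_mono)
    then show ?thesis
      using objective_eq_lagrangian[of K p b l c] obj_a by (simp add: gap_def sum_subtractf)
  qed
  have gap_sum: "0 \<le> (\<Sum>k<K. gap b k)" if "feasible K p c B b" for b
    using gap[OF that] by (intro sum_nonneg) blast
  have "is_optimal K p c B a"
    unfolding is_optimal_def using feasible_a obj_b gap_sum by force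
  moreover have "b k = a k" if "is_optimal K p c B b" "k < K" for b k
  proof -
    have b: "feasible K p c B b" "objective K p a \<le> objective K p b"
      using that feasible_a by (auto simp: is_optimal_def)
    then have "(\<Sum>k<K. gap b k) = 0"
      using obj_b[OF b(1)] gap_sum[OF b(1)] by linarith
    then have "gap b k = 0"
      using sum_nonneg_eq_0_iff[of "{..<K}" "gap b"] gap[OF b(1)] that(2) by auto
    then show ?thesis using gap[OF b(1) that(2)] by simp
  qed
  ultimately show ?thesis unfolding unique_solution_def a_def by blast
qed

theorem lemma2:
  fixes K :: nat and p c :: "nat \<Rightarrow> real" and Bbar :: real
  assumes "K \<ge> 1"
    and "\<forall>k<K. p k > 0"
    and "\<forall>k<K. c k > 0"
    and "Bbar = (1/2) * (\<Sum>k<K. p k * c k)"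
  shows "\<exists>lam :: real \<Rightarrow> real.
      (\<forall>B>0. lam B \<ge> 0)
    \<and> inj_on lam {0<..Bbar}
    \<and> (\<forall>B\<ge>Bbar. lam B = 0)
    \<and> (\<forall>B>0. unique_solution K p c B (\<lambda>k. p k / (1 + exp (lam B * c k))))
    \<and> (\<forall>\<mu> :: real \<Rightarrow> real.
          ((\<forall>B>0. \<mu> B \<ge> 0) \<and>
           (\<forall>B>0. unique_solution K p c B (\<lambda>k. p k / (1 + exp (\<mu> B * c k)))))
          \<longrightarrow> (\<forall>B>0. \<mu> B = lam B))"
proof -
  note p = assms(2) and c = assms(3)
  have cost_0: "allocation_cost K p c 0 = Bbar" using assms(4) by (simp only: allocation_cost_zero)
  define lam where
    "lam B = (if Bbar \<le> B then 0 else SOME l. 0 \<le> l \<and> allocation_cost K p c l = B)" for B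
  have lam: "0 \<le> lam B \<and> (B \<le> Bbar \<longrightarrow> allocation_cost K p c (lam B) = B)" if "0 < B" for B
    using someI_ex[OF allocation_cost_attains[OF p c that]] cost_0 by (auto simp: lam_def)
  have solution: "unique_solution K p c B (allocation p c (lam B))" if "0 < B" for B
    using lam[OF that] cost_0 by (intro allocation_unique_solution[OF p]) (auto simp: lam_def)
  have "inj_on lam {0<..Bbar}"
    by (rule inj_onI) (metis lam greaterThanAtMost_iff)
  moreover have "\<mu> B = lam B"
    if "\<forall>B>0. unique_solution K p c B (allocation p c (\<mu> B))" "0 < B" for \<mu> B
  proof -
    have "allocation p c (\<mu> B) 0 = allocation p c (lam B) 0"
      using that solution[OF that(2)] assms(1) by (auto simp: unique_solution_def)
    then show ?thesis using allocation_eq_iff p c assms(1) by auto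
  qed
  ultimately show ?thesis
    using lam solution unfolding allocation_def by (intro exI[of _ lam]) (auto simp: lam_def)
qed

end
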